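(* There is a polynomial $p$ such that for every $N\geq1$, every $\varepsilon,\eta\in(0,1]$ and every finite nonempty $V\subseteq\mathbb{R}^N$, there is a partition of $V$ into at most $2^{p(1/\varepsilon,1/\eta)}$ clusters such that whenever $u,v$ lie in the same cluster, there are at most $\eta|V|$ points $w\in V$ with $w\in B(u,1)\setminus B(v,1+\varepsilon)$.
   Context: $B(v,r)$ denotes the closed Euclidean ball of radius $r$ centered at $v$. The polynomial $p$ does not depend on $N$ or $V$. *)

theory Defs
  imports "HOL-Analysis.Analysis" "HOL-Library.Disjoint_Sets"
begin

text \<open>Points of R^N are represented as functions nat => real vanishing from index N on.\<close>
definition in_RN :: "nat \<Rightarrow> (nat \<Rightarrow> real) \<Rightarrow> bool" where
  "in_RN N x \<longleftrightarrow> (\<forall>i\<ge>N. x i = 0)"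

definition edistN :: "nat \<Rightarrow> (nat \<Rightarrow> real) \<Rightarrow> (nat \<Rightarrow> real) \<Rightarrow> real" where
  "edistN N x y = sqrt (\<Sum>i<N. (x i - y i)^2)"

definition cballN :: "nat \<Rightarrow> (nat \<Rightarrow> real) \<Rightarrow> real \<Rightarrow> (nat \<Rightarrow> real) set" where
  "cballN N v r = {w. in_RN N w \<and> edistN N v w \<le> r}"

definition poly2 :: "nat \<Rightarrow> (nat \<Rightarrow> nat \<Rightarrow> real) \<Rightarrow> real \<Rightarrow> real \<Rightarrow> real" where
  "poly2 d c x y = (\<Sum>i\<le>d. \<Sum>j\<le>d. c i j * x ^ i * y ^ j)"

end

theory Submission
  imports Defs
begin

text \<open>Points whose unit ball contains at most \<open>\<eta>|V|\<close> points of \<open>V\<close> can share a single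
  cluster. The remaining heavy points are covered by a maximal \<open>2\<close>-separated set of hubs; the
  unit balls around hubs are disjoint and heavy, so there are at most \<open>1/\<eta>\<close> hubs. For a hub
  \<open>c\<close>, a greedy argument using Bessel's inequality gives an orthonormal system
  \<open>e\<^sub>1, \<dots>, e\<^sub>D\<close> with \<open>D = O(1/(\<eta>\<epsilon>\<^sup>2))\<close> such that in every direction orthogonal to it
  the points of \<open>V\<close> within distance 3 of \<open>c\<close> have small total squared projection. A heavy
  point \<open>u\<close> is labelled by its hub, its coordinates along the \<open>e\<^sub>j\<close> rounded to multiples of
  \<open>\<delta>\<close>, and \<open>|u - c|\<^sup>2\<close> rounded to multiples of \<open>\<epsilon>/2\<close>. If \<open>u\<close> and \<open>v\<close> share a label,
  every \<open>w \<in> B(u,1) - B(v,1+\<epsilon>)\<close> has inner product at least \<open>\<epsilon>/2\<close> with the component of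
  \<open>v - u\<close> orthogonal to the \<open>e\<^sub>j\<close>, and the energy bound allows at most \<open>\<eta>|V|\<close> such \<open>w\<close>.
  The number of labels is \<open>2\<^bsup>O(\<epsilon>\<^sup>-\<^sup>3 \<eta>\<^sup>-\<^sup>2)\<^esup>\<close>.\<close>

definition innerN :: "nat \<Rightarrow> (nat \<Rightarrow> real) \<Rightarrow> (nat \<Rightarrow> real) \<Rightarrow> real" where
  "innerN N x y = (\<Sum>i<N. x i * y i)"

definition sqnormN :: "nat \<Rightarrow> (nat \<Rightarrow> real) \<Rightarrow> real" where
  "sqnormN N x = innerN N x x"

lemma innerN_commute: "innerN N x y = innerN N y x"
  by (simp add: innerN_def mult.commute)

lemma innerN_diff_left: "innerN N (x - y) z = innerN N x z - innerN N y z"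
  by (simp add: innerN_def left_diff_distrib sum_subtractf)

lemma innerN_diff_right: "innerN N z (x - y) = innerN N z x - innerN N z y"
  by (simp add: innerN_def right_diff_distrib sum_subtractf)

lemma innerN_scale_right: "innerN N x (\<lambda>i. a * y i) = a * innerN N x y"
  by (simp add: innerN_def sum_distrib_left mult.left_commute)

lemma innerN_sum_left:
  "innerN N (\<lambda>k. \<Sum>j\<in>A. a j * e j k) y = (\<Sum>j\<in>A. a j * innerN N (e j) y)"
  unfolding innerN_def
  by (simp add: sum_distrib_left sum_distrib_right mult.assoc sum.swap[of _ "{..<N}"])

lemma sqnormN_nonneg: "0 \<le> sqnormN N x"
  by (simp add: sqnormN_def innerN_def sum_nonneg)

lemma sqnormN_minus_commute: "sqnormN N (x - y) = sqnormN N (y - x)"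
  by (simp add: sqnormN_def innerN_def algebra_simps)

lemma innerN_Cauchy_Schwarz: "(innerN N x y)\<^sup>2 \<le> sqnormN N x * sqnormN N y"
  unfolding sqnormN_def innerN_def using Cauchy_Schwarz_ineq_sum[of x y "{..<N}"]
  by (simp add: power2_eq_square)

lemma abs_innerN_unit_le:
  assumes "sqnormN N y = 1"
  shows "\<bar>innerN N x y\<bar> \<le> sqrt (sqnormN N x)"
  using innerN_Cauchy_Schwarz[of N x y] assms real_le_rsqrt[of "\<bar>innerN N x y\<bar>"] by simp

lemma sqnormN_diff_minus_sqnormN_diff:
  "sqnormN N (w - v) - sqnormN N (w - u)
     = sqnormN N (v - c) - sqnormN N (u - c) - 2 * innerN N (w - c) (v - u)"
  unfolding sqnormN_def innerN_def
  by (simp add: sum_subtractf[symmetric] sum_distrib_left) (intro sum.cong, auto simp: algebra_simps)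

lemma edistN_sqnormN: "edistN N x y = sqrt (sqnormN N (x - y))"
  by (simp add: edistN_def sqnormN_def innerN_def power2_eq_square)

lemma edistN_le_iff: "0 \<le> r \<Longrightarrow> edistN N x y \<le> r \<longleftrightarrow> sqnormN N (x - y) \<le> r\<^sup>2"
  using real_le_lsqrt sqrt_le_D by (auto simp: edistN_sqnormN)

lemma edistN_commute: "edistN N x y = edistN N y x"
  by (simp add: edistN_def power2_commute)

lemma edistN_self: "edistN N x x = 0"
  by (simp add: edistN_def)

lemma edistN_triangle: "edistN N x z \<le> edistN N x y + edistN N y z"
proof -
  have "edistN N x z = L2_set (\<lambda>i. (x i - y i) + (y i - z i)) {..<N}"
    by (simp add: edistN_def L2_set_def)
  also have "\<dots> \<le> L2_set (\<lambda>i. x i - y i) {..<N} + L2_set (\<lambda>i. y i - z i) {..<N}"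
    by (rule L2_set_triangle_ineq)
  finally show ?thesis
    by (simp add: edistN_def L2_set_def)
qed

section \<open>Orthonormal systems and energy\<close>

definition orthonormalN :: "nat \<Rightarrow> (nat \<Rightarrow> nat \<Rightarrow> real) \<Rightarrow> nat \<Rightarrow> bool" where
  "orthonormalN N e D \<longleftrightarrow> (\<forall>i<D. \<forall>j<D. innerN N (e i) (e j) = (if i = j then 1 else 0))"

definition projN :: "nat \<Rightarrow> (nat \<Rightarrow> nat \<Rightarrow> real) \<Rightarrow> nat \<Rightarrow> (nat \<Rightarrow> real) \<Rightarrow> nat \<Rightarrow> real" where
  "projN N e D x = (\<lambda>k. \<Sum>j<D. innerN N x (e j) * e j k)"

lemma orthonormalN_sqnormN: "orthonormalN N e D \<Longrightarrow> j < D \<Longrightarrow> sqnormN N (e j) = 1"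
  by (simp add: orthonormalN_def sqnormN_def)

lemma orthonormalN_coeff:
  assumes "orthonormalN N e D" "k < D"
  shows "innerN N (\<lambda>i. \<Sum>j<D. a j * e j i) (e k) = a k"
proof -
  have "innerN N (\<lambda>i. \<Sum>j<D. a j * e j i) (e k) = (\<Sum>j<D. a j * innerN N (e j) (e k))"
    by (rule innerN_sum_left)
  also have "\<dots> = (\<Sum>j<D. if j = k then a j else 0)"
    using assms by (intro sum.cong) (auto simp: orthonormalN_def)
  finally show ?thesis
    using assms(2) by simp
qed

lemma innerN_projN_left: "innerN N (projN N e D x) y = (\<Sum>j<D. innerN N x (e j) * innerN N (e j) y)"
  unfolding projN_def by (rule innerN_sum_left)

lemma innerN_residual_basis:
  assumes "orthonormalN N e D" "k < D"
  shows "innerN N (e k) (x - projN N e D x) = 0"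
  using orthonormalN_coeff[OF assms, of "\<lambda>j. innerN N x (e j)"]
  by (simp add: innerN_diff_right innerN_commute projN_def)

lemma sqnormN_residual:
  assumes "orthonormalN N e D"
  shows "sqnormN N (x - projN N e D x) = sqnormN N x - (\<Sum>j<D. (innerN N x (e j))\<^sup>2)"
proof -
  have "innerN N (projN N e D x) (x - projN N e D x) = 0"
    using innerN_residual_basis[OF assms] by (simp add: innerN_projN_left)
  moreover have "innerN N x (projN N e D x) = (\<Sum>j<D. (innerN N x (e j))\<^sup>2)"
    by (simp add: innerN_commute[of N x] innerN_projN_left power2_eq_square)
  ultimately show ?thesis
    by (simp add: sqnormN_def innerN_diff_left innerN_diff_right)
qed

lemma Bessel_inequalityN:
  "orthonormalN N e D \<Longrightarrow> (\<Sum>j<D. (innerN N x (e j))\<^sup>2) \<le> sqnormN N x"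
  using sqnormN_residual[of N e D x] sqnormN_nonneg[of N "x - projN N e D x"] by simp

lemma sqnormN_residual_le: "orthonormalN N e D \<Longrightarrow> sqnormN N (x - projN N e D x) \<le> sqnormN N x"
  by (simp add: sqnormN_residual sum_nonneg)

lemma abs_innerN_projN_le:
  assumes "orthonormalN N e D" "\<And>j. j < D \<Longrightarrow> \<bar>innerN N z (e j)\<bar> \<le> \<delta>"
  shows "\<bar>innerN N x (projN N e D z)\<bar> \<le> real D * \<delta> * sqrt (sqnormN N x)"
proof -
  have "\<bar>innerN N x (projN N e D z)\<bar> \<le> (\<Sum>j<D. \<bar>innerN N z (e j)\<bar> * \<bar>innerN N x (e j)\<bar>)"
    using sum_abs[of "\<lambda>j. innerN N z (e j) * innerN N x (e j)" "{..<D}"]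
    by (simp add: innerN_commute[of N x] innerN_projN_left abs_mult)
  also have "\<dots> \<le> (\<Sum>j<D. \<delta> * sqrt (sqnormN N x))"
    using assms by (intro sum_mono mult_mono' abs_innerN_unit_le orthonormalN_sqnormN) auto
  finally show ?thesis
    by simp
qed

definition energyN :: "nat \<Rightarrow> ('a \<Rightarrow> nat \<Rightarrow> real) \<Rightarrow> 'a set \<Rightarrow> (nat \<Rightarrow> real) \<Rightarrow> real" where
  "energyN N g W y = (\<Sum>w\<in>W. (innerN N (g w) y)\<^sup>2)"

lemma energyN_le: "energyN N g W y \<le> (\<Sum>w\<in>W. sqnormN N (g w)) * sqnormN N y"
  unfolding energyN_def sum_distrib_right by (intro sum_mono innerN_Cauchy_Schwarz)

lemma energyN_scale: "energyN N g W (\<lambda>i. a * y i) = a\<^sup>2 * energyN N g W y"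
  by (simp add: energyN_def innerN_scale_right power_mult_distrib sum_distrib_left)

lemma sum_energyN_orthonormal_le:
  "orthonormalN N e D \<Longrightarrow> (\<Sum>j<D. energyN N g W (e j)) \<le> (\<Sum>w\<in>W. sqnormN N (g w))"
  unfolding energyN_def by (subst sum.swap) (intro sum_mono Bessel_inequalityN)

lemma orthonormalN_extend:
  assumes "orthonormalN N e D" "sqnormN N y = 1" "\<And>j. j < D \<Longrightarrow> innerN N (e j) y = 0"
  shows "orthonormalN N (e(D := y)) (Suc D)"
  unfolding orthonormalN_def
proof (intro allI impI)
  fix i j
  assume "i < Suc D" "j < Suc D"
  then consider "i < D" "j < D" | "i = D" "j < D" | "i < D" "j = D" | "i = D" "j = D"
    by linarith
  then show "innerN N ((e(D := y)) i) ((e(D := y)) j) = (if i = j then 1 else 0)"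
    using assms innerN_commute[of N y "e j"] by cases (auto simp: orthonormalN_def sqnormN_def)
qed

lemma sqnormN_scale: "sqnormN N (\<lambda>i. a * y i) = a\<^sup>2 * sqnormN N y"
  by (simp add: sqnormN_def innerN_def sum_distrib_left power2_eq_square mult_ac)

lemma exists_unit_direction_energy:
  assumes "t * sqnormN N y < energyN N g W y"
  shows "\<exists>y'. sqnormN N y' = 1 \<and> t < energyN N g W y' \<and>
    (\<forall>x. innerN N x y = 0 \<longrightarrow> innerN N x y' = 0)"
proof -
  have "sqnormN N y \<noteq> 0"
  proof
    assume "sqnormN N y = 0"
    then show False
      using assms energyN_le[of N g W y] by simp
  qed
  then have pos: "0 < sqnormN N y"
    using sqnormN_nonneg[of N y] by linarith
  define s where "s = 1 / sqrt (sqnormN N y)"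
  have s2: "s\<^sup>2 * sqnormN N y = 1"
    using pos by (simp add: s_def power_divide)
  then have "0 < s\<^sup>2"
    by (cases "s = 0") auto
  have "t = t * (s\<^sup>2 * sqnormN N y)"
    using s2 by simp
  also have "\<dots> = s\<^sup>2 * (t * sqnormN N y)"
    by (simp only: mult_ac)
  also have "\<dots> < s\<^sup>2 * energyN N g W y"
    using assms \<open>0 < s\<^sup>2\<close> by (rule mult_strict_left_mono)
  finally have "t < energyN N g W (\<lambda>i. s * y i)"
    by (simp only: energyN_scale)
  moreover have "sqnormN N (\<lambda>i. s * y i) = 1"
    using s2 by (simp only: sqnormN_scale)
  moreover have "\<forall>x. innerN N x y = 0 \<longrightarrow> innerN N x (\<lambda>i. s * y i) = 0"
    by (simp add: innerN_scale_right)
  ultimately show ?thesis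
    by blast
qed

lemma card_orthonormal_energy_gt_le:
  assumes "orthonormalN N e D" "\<forall>j<D. t < energyN N g W (e j)"
  shows "real D * t \<le> (\<Sum>w\<in>W. sqnormN N (g w))"
proof -
  have "real D * t = (\<Sum>j<D. t)"
    by simp
  also have "\<dots> \<le> (\<Sum>j<D. energyN N g W (e j))"
    using assms(2) by (intro sum_mono) (simp add: less_imp_le)
  also have "\<dots> \<le> (\<Sum>w\<in>W. sqnormN N (g w))"
    using assms(1) by (rule sum_energyN_orthonormal_le)
  finally show ?thesis .
qed

lemma exists_orthonormal_energy_bound:
  assumes "0 < t"
  shows "\<exists>D e. orthonormalN N e D \<and> real D * t \<le> (\<Sum>w\<in>W. sqnormN N (g w)) \<and>
    (\<forall>y. (\<forall>j<D. innerN N (e j) y = 0) \<longrightarrow> energyN N g W y \<le> t * sqnormN N y)"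
proof -
  define T where "T = (\<Sum>w\<in>W. sqnormN N (g w))"
  define S where "S = {D. \<exists>e. orthonormalN N e D \<and> (\<forall>j<D. t < energyN N g W (e j))}"
  have bound: "real D * t \<le> T" if "D \<in> S" for D
    using that card_orthonormal_energy_gt_le unfolding S_def T_def by blast
  have "S \<subseteq> {..nat \<lceil>T / t\<rceil>}"
  proof
    fix D
    assume "D \<in> S"
    then have "real D \<le> T / t"
      using bound assms by (simp add: pos_le_divide_eq)
    then show "D \<in> {..nat \<lceil>T / t\<rceil>}"
      by (simp add: le_nat_iff) linarith
  qed
  then have "finite S"
    by (rule finite_subset) simp
  moreover have "0 \<in> S"
    by (simp add: S_def orthonormalN_def)
  ultimately have "Max S \<in> S" and Max_ge: "\<And>D. D \<in> S \<Longrightarrow> D \<le> Max S"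
    by (auto intro: Max_in)
  then obtain e where e: "orthonormalN N e (Max S)" "\<forall>j<Max S. t < energyN N g W (e j)"
    by (auto simp: S_def)
  have "energyN N g W y \<le> t * sqnormN N y" if perp: "\<forall>j<Max S. innerN N (e j) y = 0" for y
  proof (rule ccontr)
    assume "\<not> ?thesis"
    then obtain y' where y': "sqnormN N y' = 1" "t < energyN N g W y'"
      "\<forall>x. innerN N x y = 0 \<longrightarrow> innerN N x y' = 0"
      using exists_unit_direction_energy[of t N y g W] by auto
    have "orthonormalN N (e(Max S := y')) (Suc (Max S))"
      using e(1) y' perp by (intro orthonormalN_extend) auto
    moreover have "\<forall>j<Suc (Max S). t < energyN N g W ((e(Max S := y')) j)"
      using e(2) y'(2) by (auto simp: less_Suc_eq)
    ultimately have "Suc (Max S) \<in> S"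
      unfolding S_def by blast
    then show False
      using Max_ge by fastforce
  qed
  then show ?thesis
    using e(1) bound[OF \<open>Max S \<in> S\<close>] unfolding T_def by blast
qed

section \<open>Few points escape between points of a common cell\<close>

lemma escape_point_inner_residual_ge:
  assumes ortho: "orthonormalN N e D"
    and coeffs: "\<And>j. j < D \<Longrightarrow> \<bar>innerN N (v - u) (e j)\<bar> \<le> \<delta>"
    and "0 \<le> \<delta>" and small: "3 * real D * \<delta> \<le> \<epsilon> / 4"
    and levels: "\<bar>sqnormN N (v - c) - sqnormN N (u - c)\<bar> \<le> \<epsilon> / 2"
    and "0 < \<epsilon>"
    and wc: "sqnormN N (w - c) \<le> 9" and wu: "sqnormN N (w - u) \<le> 1"
    and wv: "(1 + \<epsilon>)\<^sup>2 < sqnormN N (w - v)"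
  shows "\<epsilon>\<^sup>2 / 4 \<le> (innerN N (w - c) ((v - u) - projN N e D (v - u)))\<^sup>2"
proof -
  let ?p = "projN N e D (v - u)"
  have "\<bar>innerN N (w - c) ?p\<bar> \<le> real D * \<delta> * sqrt (sqnormN N (w - c))"
    using ortho coeffs by (rule abs_innerN_projN_le)
  also have "\<dots> \<le> real D * \<delta> * 3"
    using wc \<open>0 \<le> \<delta>\<close> by (intro mult_left_mono real_le_lsqrt) auto
  finally have proj_small: "\<bar>innerN N (w - c) ?p\<bar> \<le> \<epsilon> / 4"
    using small by simp
  have "innerN N (w - c) (v - u) = innerN N (w - c) ?p + innerN N (w - c) ((v - u) - ?p)"
    by (simp add: innerN_diff_right)
  moreover have "2 * \<epsilon> \<le> (1 + \<epsilon>)\<^sup>2 - 1"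
    using \<open>0 < \<epsilon>\<close> by (simp add: power2_eq_square algebra_simps)
  ultimately have "\<epsilon> / 2 < - innerN N (w - c) ((v - u) - ?p)"
    using sqnormN_diff_minus_sqnormN_diff[of N w v u c] wu wv levels proj_small by linarith
  then have "(\<epsilon> / 2)\<^sup>2 < (innerN N (w - c) ((v - u) - ?p))\<^sup>2"
    using \<open>0 < \<epsilon>\<close> power_strict_mono[of "\<epsilon> / 2" "- innerN N (w - c) ((v - u) - ?p)" 2] by simp
  then show ?thesis
    by (simp add: power_divide)
qed

lemma card_escape_le:
  assumes ortho: "orthonormalN N e D"
    and energy: "\<forall>y. (\<forall>j<D. innerN N (e j) y = 0) \<longrightarrow> energyN N (\<lambda>w. w - c) W y \<le> t * sqnormN N y"
    and "finite W" "B \<subseteq> W" "0 \<le> t"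
    and coeffs: "\<And>j. j < D \<Longrightarrow> \<bar>innerN N (v - u) (e j)\<bar> \<le> \<delta>"
    and "0 \<le> \<delta>" "3 * real D * \<delta> \<le> \<epsilon> / 4"
    and "\<bar>sqnormN N (v - c) - sqnormN N (u - c)\<bar> \<le> \<epsilon> / 2"
    and "0 < \<epsilon>" and uv: "sqnormN N (v - u) \<le> 16"
    and "\<And>w. w \<in> B \<Longrightarrow> sqnormN N (w - c) \<le> 9"
    and "\<And>w. w \<in> B \<Longrightarrow> sqnormN N (w - u) \<le> 1"
    and "\<And>w. w \<in> B \<Longrightarrow> (1 + \<epsilon>)\<^sup>2 < sqnormN N (w - v)"
  shows "real (card B) * (\<epsilon>\<^sup>2 / 4) \<le> 16 * t"
proof -
  define r where "r = (v - u) - projN N e D (v - u)"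
  have "real (card B) * (\<epsilon>\<^sup>2 / 4) = (\<Sum>w\<in>B. \<epsilon>\<^sup>2 / 4)"
    by simp
  also have "\<dots> \<le> (\<Sum>w\<in>B. (innerN N (w - c) r)\<^sup>2)"
    unfolding r_def using assms by (intro sum_mono escape_point_inner_residual_ge) auto
  also have "\<dots> \<le> energyN N (\<lambda>w. w - c) W r"
    unfolding energyN_def using assms by (intro sum_mono2) auto
  also have "\<dots> \<le> t * sqnormN N r"
    using energy innerN_residual_basis[OF ortho] unfolding r_def by blast
  also have "\<dots> \<le> t * 16"
    using sqnormN_residual_le[OF ortho, of "v - u"] uv \<open>0 \<le> t\<close>
    unfolding r_def by (intro mult_left_mono) auto
  finally show ?thesis
    by simp
qed

definition separated :: "('a \<Rightarrow> 'a \<Rightarrow> real) \<Rightarrow> real \<Rightarrow> 'a set \<Rightarrow> bool" where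
  "separated d r H \<longleftrightarrow> (\<forall>x\<in>H. \<forall>y\<in>H. x \<noteq> y \<longrightarrow> r < d x y)"

definition separated_net :: "('a \<Rightarrow> 'a \<Rightarrow> real) \<Rightarrow> real \<Rightarrow> 'a set \<Rightarrow> 'a set \<Rightarrow> bool" where
  "separated_net d r S H \<longleftrightarrow> H \<subseteq> S \<and> separated d r H \<and> (\<forall>u\<in>S. \<exists>c\<in>H. d u c \<le> r)"

lemma separated_insert:
  assumes "separated d r H" "\<forall>c\<in>H. r < d u c" "\<And>x y. d x y = d y x"
  shows "separated d r (insert u H)"
  unfolding separated_def
proof (intro ballI impI)
  fix x y
  assume "x \<in> insert u H" "y \<in> insert u H" "x \<noteq> y"
  then consider "x \<in> H" "y \<in> H" | "x = u" "y \<in> H" | "x \<in> H" "y = u"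
    by blast
  then show "r < d x y"
    using assms(1,2) \<open>x \<noteq> y\<close> assms(3)[of x u] by cases (auto simp: separated_def)
qed

lemma exists_separated_net:
  assumes "finite S" "\<And>x. d x x \<le> r" "\<And>x y. d x y = d y x"
  shows "\<exists>H. separated_net d r S H"
proof -
  define F where "F = {H. H \<subseteq> S \<and> separated d r H}"
  have "{} \<in> F"
    by (simp add: F_def separated_def)
  moreover have "\<forall>H. H \<in> F \<longrightarrow> card H < Suc (card S)"
    using \<open>finite S\<close> card_mono[of S] by (simp add: F_def less_Suc_eq_le)
  ultimately obtain H where "H \<in> F" and max: "\<And>H'. H' \<in> F \<Longrightarrow> card H' \<le> card H"
    using Lattices_Big.ex_has_greatest_nat[of "\<lambda>H. H \<in> F" "{}" card "Suc (card S)"] by blast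
  have "finite H"
    using \<open>H \<in> F\<close> \<open>finite S\<close> finite_subset[of H S] by (simp add: F_def)
  have cover: "\<exists>c\<in>H. d u c \<le> r" if "u \<in> S" for u
  proof (rule ccontr)
    assume "\<not> ?thesis"
    then have far: "\<forall>c\<in>H. r < d u c"
      by auto
    have "u \<notin> H"
    proof
      assume "u \<in> H"
      then have "r < d u u"
        using far by blast
      then show False
        using assms(2)[of u] by linarith
    qed
    have "insert u H \<in> F"
      using \<open>H \<in> F\<close> \<open>u \<in> S\<close> separated_insert[OF _ far assms(3)] by (simp add: F_def)
    then show False
      using max[of "insert u H"] \<open>u \<notin> H\<close> \<open>finite H\<close> by simp
  qed
  have "separated_net d r S H"
    using \<open>H \<in> F\<close> cover by (simp add: separated_net_def F_def)
  then show ?thesis ..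
qed

lemma card_disjoint_family_le:
  assumes "finite V" "finite H" "\<And>c. c \<in> H \<Longrightarrow> A c \<subseteq> V"
    and "\<And>c c'. c \<in> H \<Longrightarrow> c' \<in> H \<Longrightarrow> c \<noteq> c' \<Longrightarrow> A c \<inter> A c' = {}"
    and "\<And>c. c \<in> H \<Longrightarrow> m \<le> real (card (A c))"
  shows "real (card H) * m \<le> real (card V)"
proof -
  have "real (card H) * m = (\<Sum>c\<in>H. m)"
    by simp
  also have "\<dots> \<le> (\<Sum>c\<in>H. real (card (A c)))"
    using assms(5) by (rule sum_mono)
  also have "\<dots> = real (card (\<Union>c\<in>H. A c))"
    using assms by (subst card_UN_disjoint) (auto intro: finite_subset)
  also have "\<dots> \<le> real (card V)"
    using assms by (intro of_nat_mono card_mono) auto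
  finally show ?thesis .
qed

lemma exists_partition_into_fibres:
  assumes "finite V" "f ` V \<subseteq> T" "finite T"
  shows "\<exists>P. partition_on V P \<and> finite P \<and> card P \<le> card T \<and> (\<forall>C\<in>P. \<forall>u\<in>C. \<forall>v\<in>C. f u = f v)"
proof -
  define P where "P = (\<lambda>t. {x\<in>V. f x = t}) ` f ` V"
  have "partition_on V P"
    unfolding P_def by (rule partition_onI) (auto simp: disjnt_def)
  moreover have "card P \<le> card T"
    using card_image_le[of "f ` V" "\<lambda>t. {x\<in>V. f x = t}"] card_mono[OF assms(3,2)] assms(1)
    unfolding P_def by simp
  ultimately show ?thesis
    using assms(1) unfolding P_def by auto
qed

lemma abs_diff_le_if_floor_divide_eq:
  fixes x y d :: real
  assumes "\<lfloor>x / d\<rfloor> = \<lfloor>y / d\<rfloor>" "0 < d"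
  shows "\<bar>x - y\<bar> \<le> d"
proof -
  have "\<bar>x / d - y / d\<bar> < 1"
    using assms(1) floor_correct[of "x / d"] floor_correct[of "y / d"] by linarith
  then show ?thesis
    using assms(2) by (simp add: diff_divide_distrib[symmetric] abs_divide)
qed

lemma le_two_powr:
  fixes x :: real
  assumes "0 \<le> x"
  shows "x \<le> 2 powr x"
proof (cases "x \<le> 1")
  case True
  then show ?thesis
    using ge_one_powr_ge_zero[of 2 x] assms by simp
next
  case False
  define n where "n = nat \<lfloor>x\<rfloor>"
  have "real n = of_int \<lfloor>x\<rfloor>"
    using False by (simp add: n_def)
  then have "x < real n + 1"
    using floor_correct[of x] by linarith
  also have "\<dots> \<le> 2 ^ n"
  proof -
    have "n + 1 \<le> (2::nat) ^ n"
      by (induct n) auto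
    then have "real (n + 1) \<le> real ((2::nat) ^ n)"
      by (rule of_nat_mono)
    then show ?thesis
      by simp
  qed
  also have "\<dots> \<le> 2 powr x"
    using False by (simp add: n_def powr_realpow[symmetric])
  finally show ?thesis
    by simp
qed

lemma monomial_le_monomial:
  fixes a b :: real
  assumes "1 \<le> a" "1 \<le> b" "i \<le> p" "j \<le> q"
  shows "a ^ i * b ^ j \<le> a ^ p * b ^ q"
  using assms by (intro mult_mono power_increasing) auto

lemma coordinate_range_le_two_powr:
  fixes a b :: real and K :: int
  assumes a: "1 \<le> a" and b: "1 \<le> b" and D: "real D \<le> 576 * a\<^sup>2 * b"
    and K: "real_of_int K \<le> 24 * (real D + 1) * a + 1"
  shows "2 * real_of_int K + 1 \<le> 2 powr (19 * a * b)"
proof -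
  have "(real D + 1) * a \<le> (576 * a\<^sup>2 * b + 1) * a"
    using D a by (intro mult_right_mono) auto
  then have "2 * real_of_int K + 1 \<le> 27648 * (a ^ 3 * b) + 48 * a + 3"
    using K by (simp add: algebra_simps power2_eq_square power3_eq_cube)
  also have "\<dots> \<le> 32768 * (a ^ 3 * b)"
  proof -
    have "a ^ 1 * b ^ 0 \<le> a ^ 3 * b ^ 1" "a ^ 0 * b ^ 0 \<le> a ^ 3 * b ^ 1"
      by (intro monomial_le_monomial a b; simp)+
    then have "a \<le> a ^ 3 * b" "1 \<le> a ^ 3 * b"
      by simp_all
    then show ?thesis
      by linarith
  qed
  also have "\<dots> \<le> 2 powr 15 * ((2 powr a) ^ 3 * 2 powr b)"
  proof -
    have "a ^ 3 * b \<le> (2 powr a) ^ 3 * 2 powr b"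
      using a b le_two_powr[of a] le_two_powr[of b] by (intro mult_mono power_mono) auto
    then show ?thesis
      by simp
  qed
  also have "\<dots> = 2 powr (15 + 3 * a + b)"
    by (simp add: powr_add powr_power)
  also have "\<dots> \<le> 2 powr (19 * a * b)"
    using monomial_le_monomial[OF a b, of 1 1 0 1] monomial_le_monomial[OF a b, of 0 1 1 1]
      monomial_le_monomial[OF a b, of 0 1 0 1] by simp
  finally show ?thesis .
qed

lemma cell_count_le_two_powr:
  fixes a b :: real and K :: int
  assumes a: "1 \<le> a" and b: "1 \<le> b" and D: "real D \<le> 576 * a\<^sup>2 * b"
    and "0 \<le> K" "real_of_int K \<le> 24 * (real D + 1) * a + 1"
    and K': "real K' \<le> 8 * a" and h: "real h \<le> b"
  shows "1 + real h * (2 * real_of_int K + 1) ^ D * (real K' + 1) \<le> 2 powr (11000 * a ^ 3 * b\<^sup>2)"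
proof -
  define m where "m = a ^ 3 * b\<^sup>2"
  have m: "1 \<le> m" "a \<le> m" "b \<le> m"
    using monomial_le_monomial[OF a b, of 0 3 0 2] monomial_le_monomial[OF a b, of 1 3 0 2]
      monomial_le_monomial[OF a b, of 0 3 1 2] by (simp_all add: m_def)
  have "(2 * real_of_int K + 1) ^ D \<le> (2 powr (19 * a * b)) ^ D"
    using assms by (intro power_mono coordinate_range_le_two_powr) auto
  also have "\<dots> = 2 powr (real D * (19 * a * b))"
    by (simp add: powr_power)
  also have "\<dots> \<le> 2 powr (576 * a\<^sup>2 * b * (19 * a * b))"
    using D a b by (intro powr_mono mult_right_mono) auto
  also have "\<dots> = 2 powr (10944 * m)"
    by (simp add: m_def power2_eq_square power3_eq_cube algebra_simps)
  finally have coords: "(2 * real_of_int K + 1) ^ D \<le> 2 powr (10944 * m)" .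
  have hubs: "real h \<le> 2 powr m"
    using h le_two_powr[of b] b m(3) by (meson order_trans powr_mono one_le_numeral zero_le_one)
  have "real K' + 1 \<le> 2 powr 4 * 2 powr a"
    using K' a le_two_powr[of a] by (simp add: powr_numeral)
  also have "\<dots> = 2 powr (4 + a)"
    by (simp add: powr_add)
  also have "\<dots> \<le> 2 powr (5 * m)"
    using m by simp
  finally have levels: "real K' + 1 \<le> 2 powr (5 * m)" .
  have "real h * (2 * real_of_int K + 1) ^ D * (real K' + 1)
      \<le> 2 powr m * 2 powr (10944 * m) * 2 powr (5 * m)"
    using hubs coords levels \<open>0 \<le> K\<close> by (intro mult_mono) auto
  also have "\<dots> = 2 powr (10950 * m)"
    by (simp add: powr_add[symmetric])
  finally have "1 + real h * (2 * real_of_int K + 1) ^ D * (real K' + 1) \<le> 2 powr 1 * 2 powr (10950 * m)"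
    using ge_one_powr_ge_zero[of 2 "10950 * m"] m by simp
  also have "\<dots> = 2 powr (1 + 10950 * m)"
    by (simp only: powr_add)
  also have "\<dots> \<le> 2 powr (11000 * m)"
    using m by simp
  finally show ?thesis
    by (simp add: m_def mult.assoc)
qed

section \<open>The clustering\<close>

locale clustering_instance =
  fixes N :: nat and \<epsilon> \<eta> :: real and V :: "(nat \<Rightarrow> real) set"
  assumes \<epsilon>: "0 < \<epsilon>" "\<epsilon> \<le> 1" and \<eta>: "0 < \<eta>" "\<eta> \<le> 1"
    and finite_V: "finite V" and V_nonempty: "V \<noteq> {}" and V_in_RN: "\<forall>x\<in>V. in_RN N x"
begin

definition escape :: "(nat \<Rightarrow> real) \<Rightarrow> (nat \<Rightarrow> real) \<Rightarrow> (nat \<Rightarrow> real) set" where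
  "escape u v = {w\<in>V. w \<in> cballN N u 1 - cballN N v (1 + \<epsilon>)}"

definition near :: "(nat \<Rightarrow> real) \<Rightarrow> (nat \<Rightarrow> real) set" where
  "near u = {w\<in>V. edistN N u w \<le> 1}"

definition heavy :: "(nat \<Rightarrow> real) set" where
  "heavy = {u\<in>V. \<eta> * card V < card (near u)}"

definition hubs :: "(nat \<Rightarrow> real) set" where
  "hubs = (SOME H. separated_net (edistN N) 2 heavy H)"

definition hub :: "(nat \<Rightarrow> real) \<Rightarrow> nat \<Rightarrow> real" where
  "hub u = (SOME c. c \<in> hubs \<and> edistN N u c \<le> 2)"

definition vicinity :: "(nat \<Rightarrow> real) \<Rightarrow> (nat \<Rightarrow> real) set" where
  "vicinity c = {w\<in>V. edistN N c w \<le> 3}"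

text \<open>\<open>Dmax = 9/\<theta>\<close> for the energy threshold \<open>\<theta> = \<eta> \<epsilon>\<^sup>2/64\<close> of \<open>adapted_frame\<close>:
  the total energy of the vicinity is at most \<open>9|V|\<close>.\<close>

definition Dmax :: nat where
  "Dmax = nat \<lfloor>576 / (\<eta> * \<epsilon>\<^sup>2)\<rfloor>"

definition adapted_frame :: "(nat \<Rightarrow> real) \<Rightarrow> nat \<Rightarrow> (nat \<Rightarrow> nat \<Rightarrow> real) \<Rightarrow> bool" where
  "adapted_frame c D e \<longleftrightarrow> orthonormalN N e D \<and> D \<le> Dmax \<and>
     (\<forall>y. (\<forall>j<D. innerN N (e j) y = 0) \<longrightarrow>
        energyN N (\<lambda>w. w - c) (vicinity c) y \<le> \<eta> * \<epsilon>\<^sup>2 / 64 * card V * sqnormN N y)"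

definition frame :: "(nat \<Rightarrow> real) \<Rightarrow> nat \<times> (nat \<Rightarrow> nat \<Rightarrow> real)" where
  "frame c = (SOME De. adapted_frame c (fst De) (snd De))"

abbreviation frame_dim :: "(nat \<Rightarrow> real) \<Rightarrow> nat" where
  "frame_dim c \<equiv> fst (frame c)"

abbreviation frame_basis :: "(nat \<Rightarrow> real) \<Rightarrow> nat \<Rightarrow> nat \<Rightarrow> real" where
  "frame_basis c \<equiv> snd (frame c)"

definition \<delta> :: real where
  "\<delta> = \<epsilon> / (12 * (real Dmax + 1))"

definition coords :: "(nat \<Rightarrow> real) \<Rightarrow> nat \<Rightarrow> int" where
  "coords u = restrict (\<lambda>j. if j < frame_dim (hub u)
     then \<lfloor>innerN N (u - hub u) (frame_basis (hub u) j) / \<delta>\<rfloor> else 0) {..<Dmax}"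

definition level :: "(nat \<Rightarrow> real) \<Rightarrow> nat" where
  "level u = nat \<lfloor>sqnormN N (u - hub u) / (\<epsilon> / 2)\<rfloor>"

definition cell :: "(nat \<Rightarrow> real) \<Rightarrow> ((nat \<Rightarrow> real) \<times> (nat \<Rightarrow> int) \<times> nat) option" where
  "cell u = (if u \<in> heavy then Some (hub u, coords u, level u) else None)"

definition coord_bound :: int where
  "coord_bound = \<lceil>2 / \<delta>\<rceil>"

definition level_bound :: nat where
  "level_bound = nat \<lfloor>8 / \<epsilon>\<rfloor>"

definition cells :: "((nat \<Rightarrow> real) \<times> (nat \<Rightarrow> int) \<times> nat) option set" where
  "cells = insert None
     (Some ` (hubs \<times> (\<Pi>\<^sub>E j\<in>{..<Dmax}. {-coord_bound..coord_bound}) \<times> {..level_bound}))"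

lemma separated_net_hubs: "separated_net (edistN N) 2 heavy hubs"
proof -
  have "finite heavy"
    using finite_V by (simp add: heavy_def)
  then have "\<exists>H. separated_net (edistN N) 2 heavy H"
    by (rule exists_separated_net) (simp_all add: edistN_self edistN_commute)
  then show ?thesis
    unfolding hubs_def by (rule someI_ex)
qed

lemma hubs_subset_heavy: "hubs \<subseteq> heavy"
  using separated_net_hubs by (simp add: separated_net_def)

lemma finite_hubs: "finite hubs"
  using hubs_subset_heavy finite_V finite_subset[of hubs V] by (auto simp: heavy_def)

lemma hub_heavy:
  assumes "u \<in> heavy"
  shows "hub u \<in> hubs" and "edistN N u (hub u) \<le> 2"
proof -
  have "\<exists>c. c \<in> hubs \<and> edistN N u c \<le> 2"
    using separated_net_hubs assms by (auto simp: separated_net_def)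
  then have "hub u \<in> hubs \<and> edistN N u (hub u) \<le> 2"
    unfolding hub_def by (rule someI_ex)
  then show "hub u \<in> hubs" and "edistN N u (hub u) \<le> 2"
    by auto
qed

lemma sqnormN_hub_le: "u \<in> heavy \<Longrightarrow> sqnormN N (u - hub u) \<le> 4"
  using hub_heavy(2)[of u] edistN_le_iff[of 2 N u "hub u"] by simp

lemma card_hubs_le: "real (card hubs) \<le> 1 / \<eta>"
proof -
  have disjoint: "near c \<inter> near c' = {}" if "c \<in> hubs" "c' \<in> hubs" "c \<noteq> c'" for c c'
  proof -
    have "2 < edistN N c c'"
      using separated_net_hubs that by (auto simp: separated_net_def separated_def)
    show ?thesis
    proof (rule ccontr)
      assume "near c \<inter> near c' \<noteq> {}"
      then obtain w where "edistN N c w \<le> 1" "edistN N c' w \<le> 1"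
        by (auto simp: near_def)
      then show False
        using \<open>2 < edistN N c c'\<close> edistN_triangle[of N c c' w] edistN_commute[of N w c'] by linarith
    qed
  qed
  have "real (card hubs) * (\<eta> * card V) \<le> real (card V)"
    using finite_V finite_hubs disjoint hubs_subset_heavy
    by (intro card_disjoint_family_le[where A = near]) (auto simp: near_def heavy_def less_imp_le)
  moreover have "0 < real (card V)"
    using finite_V V_nonempty by (simp add: card_gt_0_iff)
  ultimately have "real (card hubs) * \<eta> \<le> 1"
    by (simp add: mult.assoc[symmetric])
  then show ?thesis
    using \<eta> by (simp add: pos_le_divide_eq)
qed

lemma sum_sqnormN_vicinity_le: "(\<Sum>w\<in>vicinity c. sqnormN N (w - c)) \<le> 9 * card V"
proof -
  have "(\<Sum>w\<in>vicinity c. sqnormN N (w - c)) \<le> (\<Sum>w\<in>vicinity c. 9)"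
    using edistN_le_iff[of 3 N c] sqnormN_minus_commute[of N _ c]
    by (intro sum_mono) (auto simp: vicinity_def)
  also have "\<dots> \<le> 9 * card V"
    using finite_V by (simp add: vicinity_def card_mono)
  finally show ?thesis .
qed

lemma exists_adapted_frame: "\<exists>D e. adapted_frame c D e"
proof -
  define t where "t = \<eta> * \<epsilon>\<^sup>2 / 64 * card V"
  have "0 < t"
    using \<epsilon> \<eta> finite_V V_nonempty by (simp add: t_def card_gt_0_iff)
  then obtain D e where e: "orthonormalN N e D"
    and D: "real D * t \<le> (\<Sum>w\<in>vicinity c. sqnormN N (w - c))"
    and energy: "\<forall>y. (\<forall>j<D. innerN N (e j) y = 0) \<longrightarrow>
      energyN N (\<lambda>w. w - c) (vicinity c) y \<le> t * sqnormN N y"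
    using exists_orthonormal_energy_bound[where N = N and W = "vicinity c" and g = "\<lambda>w. w - c"]
    by blast
  have "real D * (\<eta> * \<epsilon>\<^sup>2 / 64) * card V \<le> 9 * card V"
    using D sum_sqnormN_vicinity_le[of c] by (simp add: t_def mult.assoc)
  then have "real D * (\<eta> * \<epsilon>\<^sup>2 / 64) \<le> 9"
    using finite_V V_nonempty by (simp add: card_gt_0_iff)
  then have "real D \<le> 576 / (\<eta> * \<epsilon>\<^sup>2)"
    using \<epsilon> \<eta> by (simp add: field_simps)
  then have "D \<le> Dmax"
    unfolding Dmax_def by linarith
  then show ?thesis
    using e energy unfolding adapted_frame_def t_def by blast
qed

lemma adapted_frame: "adapted_frame c (frame_dim c) (frame_basis c)"
  using someI_ex[of "\<lambda>De. adapted_frame c (fst De) (snd De)"] exists_adapted_frame[of c]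
  unfolding frame_def by auto

lemma \<delta>_pos: "0 < \<delta>"
  using \<epsilon> by (simp add: \<delta>_def)

lemma dim_\<delta>_le: "3 * real (frame_dim c) * \<delta> \<le> \<epsilon> / 4"
proof -
  have "3 * real (frame_dim c) * \<delta> \<le> 3 * (real Dmax + 1) * \<delta>"
    using adapted_frame[of c] \<delta>_pos by (simp add: adapted_frame_def)
  also have "\<dots> = \<epsilon> / 4"
    by (simp add: \<delta>_def field_simps)
  finally show ?thesis .
qed

lemma coord_bound_nonneg: "0 \<le> coord_bound"
proof -
  have "0 < 2 / \<delta>"
    using \<delta>_pos by simp
  then show ?thesis
    unfolding coord_bound_def zero_le_ceiling by linarith
qed

lemma coords_in_range:
  assumes "u \<in> heavy"
  shows "coords u \<in> (\<Pi>\<^sub>E j\<in>{..<Dmax}. {-coord_bound..coord_bound})"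
proof -
  have "\<lfloor>innerN N (u - hub u) (frame_basis (hub u) j) / \<delta>\<rfloor> \<in> {-coord_bound..coord_bound}"
    if "j < frame_dim (hub u)" for j
  proof -
    let ?x = "innerN N (u - hub u) (frame_basis (hub u) j)"
    have "sqnormN N (frame_basis (hub u) j) = 1"
      using adapted_frame[of "hub u"] orthonormalN_sqnormN that unfolding adapted_frame_def by blast
    then have "\<bar>?x\<bar> \<le> sqrt (sqnormN N (u - hub u))"
      by (rule abs_innerN_unit_le)
    also have "\<dots> \<le> 2"
      using sqnormN_hub_le[OF assms] by (intro real_le_lsqrt) auto
    finally have "- 2 \<le> ?x" "?x \<le> 2"
      by simp_all
    then have "- 2 / \<delta> \<le> ?x / \<delta>" "?x / \<delta> \<le> 2 / \<delta>"
      using \<delta>_pos divide_right_mono[of "- 2" ?x \<delta>] divide_right_mono[of ?x 2 \<delta>] by simp_all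
    then show ?thesis
      unfolding coord_bound_def by simp linarith
  qed
  then show ?thesis
    using coord_bound_nonneg unfolding coords_def by (auto simp: restrict_PiE_iff)
qed

lemma level_le: "u \<in> heavy \<Longrightarrow> level u \<le> level_bound"
  unfolding level_def level_bound_def
  using sqnormN_hub_le[of u] \<epsilon> by (intro nat_mono floor_mono) (simp add: divide_right_mono)

lemma cell_in_cells: "cell ` V \<subseteq> cells"
  using hub_heavy(1) coords_in_range level_le by (auto simp: cell_def cells_def)

lemma finite_cells: "finite cells"
  using finite_hubs by (simp add: cells_def finite_PiE)

lemma card_cells:
  "card cells = Suc (card hubs * (nat (2 * coord_bound + 1) ^ Dmax * (level_bound + 1)))"
  using finite_hubs by (simp add: cells_def card_image card_cartesian_product card_PiE finite_PiE)

lemma card_cells_le: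
  "real (card cells) \<le>
     1 + real (card hubs) * (2 * real_of_int coord_bound + 1) ^ Dmax * (real level_bound + 1)"
proof -
  have "real (nat (2 * coord_bound + 1)) = 2 * real_of_int coord_bound + 1"
    using coord_bound_nonneg by simp
  then show ?thesis
    unfolding card_cells by (simp only: of_nat_Suc of_nat_mult of_nat_power of_nat_add of_nat_1
        mult.assoc add.commute order_refl)
qed

lemma escape_point:
  assumes "w \<in> escape u v"
  shows "w \<in> V" "edistN N u w \<le> 1" "1 + \<epsilon> < edistN N v w"
  using assms V_in_RN by (auto simp: escape_def cballN_def)

lemma card_escape_le_if_light:
  assumes "u \<in> V" "u \<notin> heavy"
  shows "real (card (escape u v)) \<le> \<eta> * card V"
proof -
  have "escape u v \<subseteq> near u"
    using escape_point by (auto simp: near_def)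
  then have "card (escape u v) \<le> card (near u)"
    using finite_V by (intro card_mono) (auto simp: near_def)
  then show ?thesis
    using assms by (auto simp: heavy_def)
qed

lemma inner_close_if_coords_eq:
  assumes "u \<in> heavy" "hub v = hub u" "coords v = coords u" "j < frame_dim (hub u)"
  shows "\<bar>innerN N (v - u) (frame_basis (hub u) j)\<bar> \<le> \<delta>"
proof -
  let ?c = "hub u" and ?e = "frame_basis (hub u) j"
  have "j < Dmax"
    using adapted_frame[of ?c] assms(4) by (simp add: adapted_frame_def)
  then have "\<lfloor>innerN N (v - ?c) ?e / \<delta>\<rfloor> = \<lfloor>innerN N (u - ?c) ?e / \<delta>\<rfloor>"
    using fun_cong[OF assms(3), of j] assms(2,4) by (simp add: coords_def)
  then have "\<bar>innerN N (v - ?c) ?e - innerN N (u - ?c) ?e\<bar> \<le> \<delta>"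
    using \<delta>_pos by (rule abs_diff_le_if_floor_divide_eq)
  moreover have "v - u = (v - ?c) - (u - ?c)"
    by (simp add: fun_eq_iff)
  ultimately show ?thesis
    by (simp only: innerN_diff_left)
qed

lemma sqnormN_close_if_level_eq:
  assumes "u \<in> heavy" "hub v = hub u" "level v = level u"
  shows "\<bar>sqnormN N (v - hub u) - sqnormN N (u - hub u)\<bar> \<le> \<epsilon> / 2"
proof -
  have "0 \<le> \<lfloor>sqnormN N (x - hub u) / (\<epsilon> / 2)\<rfloor>" for x
    using sqnormN_nonneg[of N "x - hub u"] \<epsilon> by simp
  then have "\<lfloor>sqnormN N (v - hub u) / (\<epsilon> / 2)\<rfloor> = \<lfloor>sqnormN N (u - hub u) / (\<epsilon> / 2)\<rfloor>"
    using assms(2,3) eq_nat_nat_iff unfolding level_def by metis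
  then show ?thesis
    using \<epsilon> by (intro abs_diff_le_if_floor_divide_eq) auto
qed

lemma escape_point_near_hub:
  assumes "u \<in> heavy" "w \<in> escape u v"
  shows "w \<in> vicinity (hub u)" "sqnormN N (w - hub u) \<le> 9" "sqnormN N (w - u) \<le> 1"
    "(1 + \<epsilon>)\<^sup>2 < sqnormN N (w - v)"
proof -
  have "edistN N (hub u) w \<le> 3"
    using escape_point[OF assms(2)] hub_heavy(2)[OF assms(1)] edistN_triangle[of N "hub u" w u]
      edistN_commute[of N u "hub u"] by simp
  then show "w \<in> vicinity (hub u)" "sqnormN N (w - hub u) \<le> 9"
    using escape_point[OF assms(2)] edistN_le_iff[of 3 N "hub u" w] sqnormN_minus_commute
    by (auto simp: vicinity_def)
  show "sqnormN N (w - u) \<le> 1"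
    using escape_point[OF assms(2)] edistN_le_iff[of 1 N u w] sqnormN_minus_commute by auto
  show "(1 + \<epsilon>)\<^sup>2 < sqnormN N (w - v)"
    using escape_point[OF assms(2)] edistN_le_iff[of "1 + \<epsilon>" N v w] \<epsilon> sqnormN_minus_commute[of N v w]
    by (auto simp: not_le[symmetric])
qed

lemma card_escape_le_if_same_heavy_cell:
  assumes "u \<in> heavy" "v \<in> heavy" "hub v = hub u" "coords v = coords u" "level v = level u"
  shows "real (card (escape u v)) \<le> \<eta> * card V"
proof -
  define c where "c = hub u"
  have frame: "adapted_frame c (frame_dim c) (frame_basis c)"
    by (rule adapted_frame)
  have "edistN N v u \<le> 4"
    using hub_heavy(2)[OF assms(1)] hub_heavy(2)[OF assms(2)] assms(3)
      edistN_triangle[of N v u c] edistN_commute[of N u c] by (simp add: c_def)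
  then have "sqnormN N (v - u) \<le> 16"
    using edistN_le_iff[of 4 N v u] by simp
  note escaping = escape_point_near_hub[OF assms(1), folded c_def]
  have "real (card (escape u v)) * (\<epsilon>\<^sup>2 / 4) \<le> 16 * (\<eta> * \<epsilon>\<^sup>2 / 64 * card V)"
  proof (rule card_escape_le)
    show "orthonormalN N (frame_basis c) (frame_dim c)"
      using frame by (simp add: adapted_frame_def)
    show "\<forall>y. (\<forall>j<frame_dim c. innerN N (frame_basis c j) y = 0) \<longrightarrow>
        energyN N (\<lambda>w. w - c) (vicinity c) y \<le> \<eta> * \<epsilon>\<^sup>2 / 64 * card V * sqnormN N y"
      using frame by (simp add: adapted_frame_def)
    show "\<bar>innerN N (v - u) (frame_basis c j)\<bar> \<le> \<delta>" if "j < frame_dim c" for j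
      using inner_close_if_coords_eq[OF assms(1,3,4)] that by (simp add: c_def)
    show "\<bar>sqnormN N (v - c) - sqnormN N (u - c)\<bar> \<le> \<epsilon> / 2"
      using sqnormN_close_if_level_eq[OF assms(1,3,5)] by (simp add: c_def)
  qed (use escaping finite_V \<epsilon> \<eta> \<delta>_pos dim_\<delta>_le \<open>sqnormN N (v - u) \<le> 16\<close> in
        \<open>auto simp: vicinity_def\<close>)
  then show ?thesis
    using \<epsilon> by (simp add: field_simps)
qed

lemma card_escape_le_if_same_cell:
  assumes "u \<in> V" "cell v = cell u"
  shows "real (card (escape u v)) \<le> \<eta> * card V"
proof (cases "u \<in> heavy")
  case True
  then have "v \<in> heavy" "hub v = hub u" "coords v = coords u" "level v = level u"
    using assms(2) by (auto simp: cell_def split: if_splits)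
  then show ?thesis
    using True by (intro card_escape_le_if_same_heavy_cell) auto
next
  case False
  with assms(1) show ?thesis
    by (rule card_escape_le_if_light)
qed

lemma card_cells_le_two_powr: "real (card cells) \<le> 2 powr (11000 * (1 / \<epsilon>) ^ 3 * (1 / \<eta>)\<^sup>2)"
proof -
  have "real Dmax \<le> 576 / (\<eta> * \<epsilon>\<^sup>2)"
    using \<epsilon> \<eta> by (simp add: Dmax_def)
  then have Dmax: "real Dmax \<le> 576 * (1 / \<epsilon>)\<^sup>2 * (1 / \<eta>)"
    by (simp add: power_one_over field_simps)
  have "real_of_int coord_bound \<le> 2 / \<delta> + 1"
    unfolding coord_bound_def by linarith
  also have "\<dots> = 24 * (real Dmax + 1) * (1 / \<epsilon>) + 1"
    using \<epsilon> by (simp add: \<delta>_def field_simps)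
  finally have coords: "real_of_int coord_bound \<le> 24 * (real Dmax + 1) * (1 / \<epsilon>) + 1" .
  have levels: "real level_bound \<le> 8 * (1 / \<epsilon>)"
    using \<epsilon> by (simp add: level_bound_def)
  show ?thesis
    using card_cells_le cell_count_le_two_powr[OF _ _ Dmax coord_bound_nonneg coords levels card_hubs_le] \<epsilon> \<eta>
    by simp
qed

theorem exists_clustering:
  "\<exists>P. partition_on V P \<and> finite P \<and> real (card P) \<le> 2 powr (11000 * (1 / \<epsilon>) ^ 3 * (1 / \<eta>)\<^sup>2) \<and>
     (\<forall>C\<in>P. \<forall>u\<in>C. \<forall>v\<in>C. real (card (escape u v)) \<le> \<eta> * card V)"
proof -
  obtain P where P: "partition_on V P" "finite P" "card P \<le> card cells"
    and fibres: "\<forall>C\<in>P. \<forall>u\<in>C. \<forall>v\<in>C. cell u = cell v"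
    using exists_partition_into_fibres[OF finite_V cell_in_cells finite_cells] by blast
  have "real (card P) \<le> 2 powr (11000 * (1 / \<epsilon>) ^ 3 * (1 / \<eta>)\<^sup>2)"
    using P(3) card_cells_le_two_powr by (meson of_nat_le_iff order_trans)
  moreover have "real (card (escape u v)) \<le> \<eta> * card V" if "C \<in> P" "u \<in> C" "v \<in> C" for C u v
    using that fibres partition_onD1[OF P(1)] card_escape_le_if_same_cell[of u v] by blast
  ultimately show ?thesis
    using P by blast
qed

end

lemma poly2_monomial:
  assumes "p \<le> d" "q \<le> d"
  shows "poly2 d (\<lambda>i j. if i = p \<and> j = q then a else 0) x y = a * x ^ p * y ^ q"
proof -
  have "(if i = p \<and> j = q then a else 0) * x ^ i * y ^ j =
      (if i = p \<and> j = q then a * x ^ p * y ^ q else 0)" for i j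
    by simp
  then have "poly2 d (\<lambda>i j. if i = p \<and> j = q then a else 0) x y =
      (\<Sum>i\<le>d. \<Sum>j\<le>d. if i = p \<and> j = q then a * x ^ p * y ^ q else 0)"
    by (simp only: poly2_def)
  also have "\<dots> = (\<Sum>i\<le>d. if i = p then a * x ^ p * y ^ q else 0)"
    using assms(2) by (intro sum.cong refl) simp
  also have "\<dots> = a * x ^ p * y ^ q"
    using assms(1) by simp
  finally show ?thesis .
qed

theorem lemmaA2:
  shows "\<exists>d c. \<forall>N::nat. \<forall>\<epsilon>::real. \<forall>\<eta>::real. \<forall>V.
    N \<ge> 1 \<longrightarrow> 0 < \<epsilon> \<longrightarrow> \<epsilon> \<le> 1 \<longrightarrow> 0 < \<eta> \<longrightarrow> \<eta> \<le> 1 \<longrightarrow>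
    finite V \<longrightarrow> V \<noteq> {} \<longrightarrow> (\<forall>x\<in>V. in_RN N x) \<longrightarrow>
    (\<exists>P. partition_on V P \<and> finite P \<and>
         real (card P) \<le> 2 powr (poly2 d c (1/\<epsilon>) (1/\<eta>)) \<and>
         (\<forall>C\<in>P. \<forall>u\<in>C. \<forall>v\<in>C.
            real (card {w\<in>V. w \<in> cballN N u 1 - cballN N v (1 + \<epsilon>)}) \<le> \<eta> * real (card V)))"
proof (intro exI[of _ 3] exI[of _ "\<lambda>i j. if i = 3 \<and> j = 2 then 11000 else 0"] allI impI)
  fix N :: nat and \<epsilon> \<eta> :: real and V :: "(nat \<Rightarrow> real) set"
  assume "1 \<le> N" "0 < \<epsilon>" "\<epsilon> \<le> 1" "0 < \<eta>" "\<eta> \<le> 1" "finite V" "V \<noteq> {}" "\<forall>x\<in>V. in_RN N x"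
  then interpret clustering_instance N \<epsilon> \<eta> V
    by unfold_locales
  show "\<exists>P. partition_on V P \<and> finite P \<and>
      real (card P) \<le> 2 powr (poly2 3 (\<lambda>i j. if i = 3 \<and> j = 2 then 11000 else 0) (1/\<epsilon>) (1/\<eta>)) \<and>
      (\<forall>C\<in>P. \<forall>u\<in>C. \<forall>v\<in>C.
         real (card {w\<in>V. w \<in> cballN N u 1 - cballN N v (1 + \<epsilon>)}) \<le> \<eta> * real (card V))"
    using exists_clustering by (simp add: poly2_monomial escape_def)
qed

end
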